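(* Let $f_i(z)$ and $g_i(z)$ be the generating functions (by length) of partial ternary paths ending at level $i$ and of reversed partial ternary paths ending at level $i$, respectively. Then $$\sum_{i\ge0} i\,f_i(z)\,g_i(z)=\frac{3t}{(1-3t)^2(1-t)},$$ where $t$ is the formal power series in $x=z^3$ with $t(1-t)^2=x$, $t=x+2x^2+\cdots$. Consequently the coefficient of $z^{3N}$ in this series is the total area of all ternary paths of length $3N$.
   Context: A partial ternary path: lattice path from $(0,0)$ with steps $(1,1)$, $(1,-2)$, all ordinates $\ge0$, ending at level equal to its final ordinate. A reversed partial ternary path: lattice path from $(0,0)$ with steps $(1,2)$, $(1,-1)$, all ordinates $\ge 0$. A ternary path of length $3N$ is a partial ternary path of length $3N$ ending at level $0$; its area is the sum of its ordinates $c_0+\cdots+c_{3N}$, and the total area is the sum over all such paths. *)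

theory Defs
  imports "HOL-Computational_Algebra.Formal_Power_Series"
begin

(* A lattice path is encoded by its list of ordinate increments (steps). The ordinate
   after k steps is the sum of the first k increments. *)

definition nonneg_path :: "int list \<Rightarrow> bool" where
  "nonneg_path s \<longleftrightarrow> (\<forall>k \<le> length s. sum_list (take k s) \<ge> 0)"

definition partial_ternary :: "nat \<Rightarrow> nat \<Rightarrow> int list set" where
  "partial_ternary n i = {s. set s \<subseteq> {1, -2} \<and> length s = n \<and> nonneg_path s \<and> sum_list s = int i}"

definition rev_partial_ternary :: "nat \<Rightarrow> nat \<Rightarrow> int list set" where
  "rev_partial_ternary n i = {s. set s \<subseteq> {2, -1} \<and> length s = n \<and> nonneg_path s \<and> sum_list s = int i}"

definition fgen :: "nat \<Rightarrow> real fps" where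
  "fgen i = Abs_fps (\<lambda>n. of_nat (card (partial_ternary n i)))"

definition ggen :: "nat \<Rightarrow> real fps" where
  "ggen i = Abs_fps (\<lambda>n. of_nat (card (rev_partial_ternary n i)))"

definition path_area :: "int list \<Rightarrow> int" where
  "path_area s = (\<Sum>k = 0..length s. sum_list (take k s))"

definition total_area :: "nat \<Rightarrow> int" where
  "total_area N = (\<Sum>s \<in> partial_ternary (3 * N) 0. path_area s)"

end

theory Submission
  imports Defs
begin

text \<open>
  Cutting a ternary path of length \<open>n\<close> at time \<open>k\<close>, where it is at level \<open>i\<close>, and reading
  the final segment backwards gives a partial ternary path of length \<open>k\<close> and a reversed partial
  ternary path of length \<open>n - k\<close>, both ending at level \<open>i\<close>; this is a bijection. Summing the
  level over all cuts, the coefficient of \<open>z\<^sup>n\<close> in \<open>\<Sum>\<^sub>i i f\<^sub>i g\<^sub>i\<close> is the total area of ternary paths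
  of length \<open>n\<close>.

  To evaluate the series, write \<open>\<tau> = t(z\<^sup>3)\<close>, so \<open>\<tau>(1 - \<tau>)\<^sup>2 = z\<^sup>3\<close>, and \<open>u = z/(1 - \<tau>)\<close>, which solves
  \<open>u = z(1 + u\<^sup>3)\<close>. The recurrence of \<open>f\<^sub>i\<close> gives \<open>f\<^sub>i = u\<^sup>i/(1 - \<tau>)\<close>. The recurrence
  \<open>g\<^sub>i = [i = 0] + z(g\<^sub>i\<^sub>-\<^sub>2 + g\<^sub>i\<^sub>+\<^sub>1)\<close>, multiplied by \<open>w(i) u\<^sup>i\<close> and summed, expresses
  \<open>\<Sum>\<^sub>i w(i) g\<^sub>i u\<^sup>i\<close> through the same sums with shifted weights (the kernel method). Taking
  \<open>w = 1, x, x\<^sup>2\<close> yields linear equations for the moments \<open>S\<^sub>k = \<Sum>\<^sub>i i\<^sup>k g\<^sub>i u\<^sup>i\<close>, whose solution is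
  \<open>S\<^sub>1 = 3\<tau>/(1 - 3\<tau>)\<^sup>2\<close>; since \<open>\<Sum>\<^sub>i i f\<^sub>i g\<^sub>i = S\<^sub>1/(1 - \<tau>)\<close> this is the claim. Identities between infinite
  sums are handled as congruences modulo \<open>z\<^sup>m\<close> between partial sums, the \<open>i\<close>-th term being
  divisible by \<open>z\<^sup>i\<close>.
\<close>

section \<open>Counting lattice paths\<close>

definition paths :: "int set \<Rightarrow> nat \<Rightarrow> int \<Rightarrow> int list set" where
  "paths A n j = {s. set s \<subseteq> A \<and> length s = n \<and> nonneg_path s \<and> sum_list s = j}"

lemma partial_ternary_eq_paths: "partial_ternary n i = paths {1, -2} n (int i)"
  by (simp add: partial_ternary_def paths_def)

lemma nonneg_path_Nil [simp]: "nonneg_path []"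
  by (simp add: nonneg_path_def)

lemma nonneg_path_snoc: "nonneg_path (s @ [x]) \<longleftrightarrow> nonneg_path s \<and> 0 \<le> sum_list s + x"
  by (auto simp: nonneg_path_def le_Suc_eq)

lemma paths_0: "paths A 0 j = (if j = 0 then {[]} else {})"
  by (auto simp: paths_def)

lemma paths_neg: "j < 0 \<Longrightarrow> paths A n j = {}"
  by (auto simp: paths_def nonneg_path_def dest!: spec[of _ "length _"])

lemma finite_paths: "finite A \<Longrightarrow> finite (paths A n j)"
  unfolding paths_def by (rule finite_subset[OF _ finite_lists_length_eq[of A n]]) auto

lemma paths_Suc:
  assumes "a \<noteq> b" "0 \<le> j"
  shows "paths {a, b} (Suc n) j =
    (\<lambda>s. s @ [a]) ` paths {a, b} n (j - a) \<union> (\<lambda>s. s @ [b]) ` paths {a, b} n (j - b)"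
proof (rule set_eqI)
  fix s
  show "s \<in> paths {a, b} (Suc n) j \<longleftrightarrow>
    s \<in> (\<lambda>s. s @ [a]) ` paths {a, b} n (j - a) \<union> (\<lambda>s. s @ [b]) ` paths {a, b} n (j - b)"
  proof
    assume s: "s \<in> paths {a, b} (Suc n) j"
    then obtain s' x where "s = s' @ [x]"
      by (cases s rule: rev_cases) (auto simp: paths_def)
    with s assms show "s \<in> (\<lambda>s. s @ [a]) ` paths {a, b} n (j - a) \<union> (\<lambda>s. s @ [b]) ` paths {a, b} n (j - b)"
      by (auto simp: paths_def nonneg_path_snoc)
  qed (use assms in \<open>auto simp: paths_def nonneg_path_snoc\<close>)
qed

lemma card_paths_Suc:
  assumes "a \<noteq> b" "0 \<le> j"
  shows "card (paths {a, b} (Suc n) j) = card (paths {a, b} n (j - a)) + card (paths {a, b} n (j - b))"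
proof -
  have "inj_on (\<lambda>s. s @ [c]) S" for c :: int and S
    by (auto simp: inj_on_def)
  moreover have "finite (paths {a, b} n k)" for k
    by (simp add: finite_paths)
  ultimately show ?thesis
    unfolding paths_Suc[OF assms] using assms(1)
    by (subst card_Un_disjoint) (auto simp: card_image)
qed

definition path_gf :: "int set \<Rightarrow> int \<Rightarrow> real fps" where
  "path_gf A j = Abs_fps (\<lambda>n. of_nat (card (paths A n j)))"

lemma fgen_eq_path_gf: "fgen i = path_gf {1, -2} (int i)"
  by (simp add: fgen_def path_gf_def partial_ternary_eq_paths)

lemma ggen_eq_path_gf: "ggen i = path_gf {2, -1} (int i)"
  by (simp add: ggen_def path_gf_def rev_partial_ternary_def paths_def)

lemma path_gf_neg: "j < 0 \<Longrightarrow> path_gf A j = 0"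
  by (simp add: path_gf_def paths_neg fps_zero_def)

lemma path_gf_rec:
  assumes "a \<noteq> b" "0 \<le> j"
  shows "path_gf {a, b} j = (if j = 0 then 1 else 0) + fps_X * (path_gf {a, b} (j - a) + path_gf {a, b} (j - b))"
proof (rule fps_ext)
  fix n show "fps_nth (path_gf {a, b} j) n =
      fps_nth ((if j = 0 then 1 else 0) + fps_X * (path_gf {a, b} (j - a) + path_gf {a, b} (j - b))) n"
    by (cases n) (simp_all add: path_gf_def paths_0 card_paths_Suc[OF assms])
qed

lemma fgen_rec:
  "fgen i = (if i = 0 then 1 else 0) + fps_X * ((if 1 \<le> i then fgen (i - 1) else 0) + fgen (i + 2))"
  using path_gf_rec[of 1 "-2" "int i"]
  by (cases "i = 0") (simp_all add: fgen_eq_path_gf path_gf_neg add.commute)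

lemma ggen_rec:
  "ggen i = (if i = 0 then 1 else 0) + fps_X * ((if 2 \<le> i then ggen (i - 2) else 0) + ggen (i + 1))"
  using path_gf_rec[of 2 "-1" "int i"]
  by (cases "2 \<le> i") (auto simp: ggen_eq_path_gf path_gf_neg add.commute)

section \<open>Cutting a ternary path\<close>

text \<open>
  Reading a path backwards turns each step \<open>d\<close> into \<open>-d\<close>; it carries the final segment of a
  ternary path to a reversed partial ternary path.
\<close>

definition reflect_path :: "int list \<Rightarrow> int list" where
  "reflect_path s = rev (map uminus s)"

lemma reflect_path_reflect_path [simp]: "reflect_path (reflect_path s) = s"
  by (simp add: reflect_path_def rev_map)

lemma length_reflect_path [simp]: "length (reflect_path s) = length s"
  by (simp add: reflect_path_def)

lemma set_reflect_path: "set (reflect_path s) = uminus ` set s"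
  by (simp add: reflect_path_def)

lemma sum_list_uminus: "sum_list (map uminus xs) = - sum_list (xs :: 'a::ab_group_add list)"
  by (induction xs) auto

lemma sum_list_reflect_path: "sum_list (reflect_path s) = - sum_list s"
  by (simp add: reflect_path_def sum_list_uminus)

lemma sum_take_reflect_path:
  assumes "j \<le> length s"
  shows "sum_list (take j (reflect_path s)) = sum_list (take (length s - j) s) - sum_list s"
proof -
  have "sum_list s = sum_list (take (length s - j) s) + sum_list (drop (length s - j) s)"
    by (metis append_take_drop_id sum_list_append)
  then show ?thesis
    by (simp add: reflect_path_def take_rev drop_map sum_list_uminus)
qed

lemma nonneg_path_append_reflect_path:
  assumes "sum_list a = sum_list b"
  shows "nonneg_path (a @ reflect_path b) \<longleftrightarrow> nonneg_path a \<and> nonneg_path b"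
proof -
  have head_sum: "sum_list (take j (a @ reflect_path b)) = sum_list (take j a)" if "j \<le> length a" for j
    using that by simp
  have tail_sum: "sum_list (take (length a + j) (a @ reflect_path b)) = sum_list (take (length b - j) b)"
    if "j \<le> length b" for j
    using that assms by (simp add: sum_take_reflect_path)
  show ?thesis
  proof
    assume h: "nonneg_path (a @ reflect_path b)"
    have "0 \<le> sum_list (take k a)" if "k \<le> length a" for k
      using h[unfolded nonneg_path_def, rule_format, of k] head_sum[OF that] that by simp
    moreover have "0 \<le> sum_list (take k b)" if "k \<le> length b" for k
      using h[unfolded nonneg_path_def, rule_format, of "length a + (length b - k)"]
        tail_sum[of "length b - k"] that by simp
    ultimately show "nonneg_path a \<and> nonneg_path b"
      by (simp add: nonneg_path_def)
  next
    assume h: "nonneg_path a \<and> nonneg_path b"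
    show "nonneg_path (a @ reflect_path b)"
      unfolding nonneg_path_def
    proof (intro allI impI)
      fix k assume k: "k \<le> length (a @ reflect_path b)"
      show "0 \<le> sum_list (take k (a @ reflect_path b))"
      proof (cases "k \<le> length a")
        case True then show ?thesis using h head_sum by (simp add: nonneg_path_def)
      next
        case False
        then have "k = length a + (k - length a)" "k - length a \<le> length b"
          using k by simp_all
        then show ?thesis using h tail_sum by (metis nonneg_path_def diff_le_self)
      qed
    qed
  qed
qed

lemma append_reflect_path_in_paths_iff:
  assumes "length a = k"
  shows "a @ reflect_path b \<in> paths {1, -2} (k + l) 0 \<and> sum_list a = j \<longleftrightarrow>
         a \<in> paths {1, -2} k j \<and> b \<in> paths {2, -1} l j"
proof -
  have "uminus ` set b \<subseteq> {1, -2} \<longleftrightarrow> set b \<subseteq> {2, -1}"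
    by force
  then have steps: "set (a @ reflect_path b) \<subseteq> {1, -2} \<longleftrightarrow> set a \<subseteq> {1, -2} \<and> set b \<subseteq> {2, -1}"
    by (simp add: set_reflect_path)
  have sums: "sum_list (a @ reflect_path b) = 0 \<and> sum_list a = j \<longleftrightarrow> sum_list a = j \<and> sum_list b = j"
    by (auto simp: sum_list_reflect_path)
  have "length (a @ reflect_path b) = k + l \<longleftrightarrow> length b = l"
    using assms by auto
  moreover have "sum_list a = j \<and> sum_list b = j \<Longrightarrow>
      nonneg_path (a @ reflect_path b) \<longleftrightarrow> nonneg_path a \<and> nonneg_path b"
    by (simp add: nonneg_path_append_reflect_path)
  ultimately show ?thesis
    unfolding paths_def mem_Collect_eq using assms steps sums by blast
qed

lemma card_paths_at_level:
  "card {s \<in> paths {1, -2} (k + l) 0. sum_list (take k s) = j} =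
     card (paths {1, -2} k j) * card (paths {2, -1} l j)"
proof -
  define glue where "glue = (\<lambda>(a, b). a @ reflect_path b)"
  let ?P = "paths {1, -2} k j \<times> paths {2, -1} l j"
  have len: "length a = k" if "(a, b) \<in> ?P" for a b
    using that by (simp add: paths_def)
  have "{s \<in> paths {1, -2} (k + l) 0. sum_list (take k s) = j} = glue ` ?P"
  proof (intro set_eqI iffI)
    fix s assume s: "s \<in> {s \<in> paths {1, -2} (k + l) 0. sum_list (take k s) = j}"
    then have "length (take k s) = k"
      by (simp add: paths_def)
    moreover have s_eq: "s = take k s @ reflect_path (reflect_path (drop k s))"
      by simp
    ultimately have "(take k s, reflect_path (drop k s)) \<in> ?P"
      using s append_reflect_path_in_paths_iff[of "take k s" k "reflect_path (drop k s)" l j]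
      by simp
    then show "s \<in> glue ` ?P"
      unfolding glue_def by (rule rev_image_eqI) (simp add: s_eq[symmetric])
  next
    fix s assume "s \<in> glue ` ?P"
    then obtain a b where ab: "(a, b) \<in> ?P" "s = a @ reflect_path b"
      by (auto simp: glue_def)
    moreover have "length a = k"
      using ab(1) by (rule len)
    ultimately show "s \<in> {s \<in> paths {1, -2} (k + l) 0. sum_list (take k s) = j}"
      using append_reflect_path_in_paths_iff[of a k b l j] by simp
  qed
  moreover have "inj_on glue ?P"
  proof (rule inj_onI)
    fix p q assume "p \<in> ?P" "q \<in> ?P" "glue p = glue q"
    then have "fst p = fst q \<and> reflect_path (snd p) = reflect_path (snd q)"
      using len by (auto simp: glue_def append_eq_append_conv split: prod.splits)
    then show "p = q"
      by (metis prod_eq_iff reflect_path_reflect_path)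
  qed
  ultimately show ?thesis
    by (simp add: card_image card_cartesian_product)
qed

lemma sum_list_le_length: "(\<And>x. x \<in> set s \<Longrightarrow> x \<le> 1) \<Longrightarrow> sum_list s \<le> int (length s)"
  by (induction s) force+

lemma sum_prefix_sums_by_level:
  assumes "k \<le> n" "n < M"
  shows "(\<Sum>s\<in>paths {1, -2} n 0. sum_list (take k s)) =
    (\<Sum>i<M. int i * int (card (paths {1, -2} k (int i)) * card (paths {2, -1} (n - k) (int i))))"
proof -
  let ?P = "paths {1, -2} n 0"
  let ?level = "\<lambda>s. sum_list (take k s)"
  have level_range: "0 \<le> ?level s \<and> ?level s \<le> int k" if "s \<in> ?P" for s
  proof -
    have "x \<le> 1" if "x \<in> set (take k s)" for x
      using \<open>s \<in> ?P\<close> that set_take_subset by (fastforce simp: paths_def)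
    moreover have "nonneg_path s" "length s = n"
      using that by (simp_all add: paths_def)
    ultimately show ?thesis
      using assms(1) sum_list_le_length[of "take k s"] by (simp add: nonneg_path_def)
  qed
  have level_class: "{s \<in> ?P. nat (?level s) = i} = {s \<in> paths {1, -2} (k + (n - k)) 0. ?level s = int i}"
    for i using level_range assms(1) by force
  have "(\<Sum>s\<in>?P. ?level s) = (\<Sum>i<M. \<Sum>s\<in>{s \<in> ?P. nat (?level s) = i}. ?level s)"
    using level_range assms by (intro sum.group[symmetric]) (auto simp: finite_paths nat_less_iff dest!: level_range)
  also have "\<dots> = (\<Sum>i<M. \<Sum>s\<in>{s \<in> ?P. nat (?level s) = i}. int i)"
    using level_range by (intro sum.cong) force+
  also have "\<dots> = (\<Sum>i<M. int i * int (card {s \<in> ?P. nat (?level s) = i}))"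
    by (simp add: mult.commute)
  also have "\<dots> = (\<Sum>i<M. int i * int (card (paths {1, -2} k (int i)) * card (paths {2, -1} (n - k) (int i))))"
    by (simp only: level_class card_paths_at_level)
  finally show ?thesis .
qed

lemma fps_nth_fgen: "fps_nth (fgen i) n = of_nat (card (paths {1, -2} n (int i)))"
  by (simp add: fgen_eq_path_gf path_gf_def)

lemma fps_nth_ggen: "fps_nth (ggen i) n = of_nat (card (paths {2, -1} n (int i)))"
  by (simp add: ggen_eq_path_gf path_gf_def)

lemma fps_nth_level_weighted_sum_eq_area:
  assumes "n < M"
  shows "fps_nth (\<Sum>i<M. of_nat i * fgen i * ggen i) n = of_int (\<Sum>s\<in>partial_ternary n 0. path_area s)"
proof -
  have "fps_nth (of_nat i * fgen i * ggen i) n =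
      (\<Sum>k=0..n. of_int (int i * int (card (paths {1, -2} k (int i)) * card (paths {2, -1} (n - k) (int i)))))"
    for i
    unfolding mult.assoc fps_of_nat[symmetric] fps_mult_left_const_nth
    by (simp add: fps_mult_nth fps_nth_fgen fps_nth_ggen sum_distrib_left)
  then have "fps_nth (\<Sum>i<M. of_nat i * fgen i * ggen i) n =
      (\<Sum>i<M. \<Sum>k=0..n. of_int (int i * int (card (paths {1, -2} k (int i)) * card (paths {2, -1} (n - k) (int i)))))"
    by (simp only: fps_sum_nth)
  also have "\<dots> = of_int (\<Sum>k=0..n. \<Sum>s\<in>paths {1, -2} n 0. sum_list (take k s))"
    using assms by (simp add: sum.swap[of _ "{..<M}"] sum_prefix_sums_by_level)
  also have "\<dots> = of_int (\<Sum>s\<in>partial_ternary n 0. path_area s)"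
    by (simp add: sum.swap[of _ "{0..n}"] path_area_def partial_ternary_eq_paths paths_def)
  finally show ?thesis .
qed

section \<open>Congruences modulo powers of \<open>X\<close>\<close>

lemma fps_nth_eq_if_X_power_dvd_diff:
  fixes f g :: "'a::comm_ring_1 fps"
  assumes "fps_X ^ m dvd f - g" "n < m"
  shows "fps_nth f n = fps_nth g n"
proof -
  obtain h where "f - g = fps_X ^ m * h"
    using assms(1) by (rule dvdE)
  then have "fps_nth (f - g) n = 0"
    using assms(2) by (simp add: fps_X_power_mult_nth)
  then show ?thesis
    by simp
qed

lemma eq_if_X_power_dvd_diff:
  fixes f g :: "'a::comm_ring_1 fps"
  assumes "\<And>m. fps_X ^ m dvd f - g"
  shows "f = g"
  by (rule fps_ext) (rule fps_nth_eq_if_X_power_dvd_diff[OF assms lessI])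

lemma sums_if_X_power_dvd:
  fixes f :: "nat \<Rightarrow> 'a::comm_ring_1 fps"
  assumes "\<And>m. fps_X ^ m dvd (\<Sum>i<m + k. f i) - S"
  shows "f sums S"
  unfolding sums_def tendsto_fps_iff eventually_sequentially
proof
  fix n
  have "fps_nth (\<Sum>i<M. f i) n = fps_nth S n" if "Suc n + k \<le> M" for M
    using fps_nth_eq_if_X_power_dvd_diff[OF assms[of "M - k"]] that by simp
  then show "\<exists>N. \<forall>M\<ge>N. fps_nth (\<Sum>i<M. f i) n = fps_nth S n"
    by blast
qed

section \<open>The kernel method\<close>

locale ternary_kernel =
  fixes \<tau> :: "real fps"
  assumes tau_cubic: "\<tau> * (1 - \<tau>)^2 = fps_X ^ 3"
    and fps_nth_tau_0: "fps_nth \<tau> 0 = 0"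
begin

definition B :: "real fps" where
  "B = inverse (1 - \<tau>)"

definition u :: "real fps" where
  "u = fps_X * B"

lemma one_minus_tau_times_B: "(1 - \<tau>) * B = 1"
  unfolding B_def by (rule inverse_mult_eq_1') (simp add: fps_nth_tau_0)

lemma fps_X_eq: "fps_X = (1 - \<tau>) * u"
  using one_minus_tau_times_B unfolding u_def by algebra

lemma fps_X_times_u_squared: "fps_X * u^2 = \<tau>"
  using tau_cubic one_minus_tau_times_B unfolding u_def by algebra

lemma u_kernel: "u = fps_X * (1 + u^3)"
  using tau_cubic one_minus_tau_times_B unfolding u_def by algebra

lemma B_times_u_power_rec:
  "B * u ^ i = (if i = 0 then 1 else 0) + fps_X * ((if 1 \<le> i then B * u ^ (i - 1) else 0) + B * u ^ (i + 2))"
proof (cases i)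
  case 0
  have "1 + fps_X * (B * u^2) = 1 + \<tau> * B"
    using fps_X_times_u_squared by (metis mult.commute mult.left_commute)
  also have "\<dots> = B"
    using one_minus_tau_times_B by (simp add: algebra_simps)
  finally have "B = 1 + fps_X * (B * u^2)" ..
  then show ?thesis
    using 0 by (simp add: power2_eq_square)
next
  case (Suc j)
  then have "B * u ^ i = B * u ^ j * u"
    by simp
  also have "\<dots> = B * u ^ j * (fps_X * (1 + u^3))"
    by (rule arg_cong[OF u_kernel])
  also have "\<dots> = fps_X * (B * u ^ j + B * u ^ (j + 3))"
    by (simp add: power_add algebra_simps)
  finally have "B * u ^ i = fps_X * (B * u ^ j + B * u ^ (j + 3))" .
  then show ?thesis
    using Suc by (simp add: numeral_3_eq_3)
qed

lemma fgen_eq: "fgen i = B * u ^ i"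
proof -
  have "\<forall>i. fps_nth (fgen i) n = fps_nth (B * u ^ i) n" for n
  proof (induction n)
    case 0
    show ?case
      by (subst fgen_rec, subst B_times_u_power_rec) simp
  next
    case (Suc n)
    show ?case
      by (subst fgen_rec, subst B_times_u_power_rec) (simp add: Suc.IH)
  qed
  then show ?thesis
    by (simp add: fps_ext)
qed

definition weighted_term :: "(real \<Rightarrow> real) \<Rightarrow> nat \<Rightarrow> real fps" where
  "weighted_term w i = fps_const (w (real i)) * ggen i * u ^ i"

definition weighted_sum :: "(real \<Rightarrow> real) \<Rightarrow> nat \<Rightarrow> real fps" where
  "weighted_sum w M = (\<Sum>i<M. weighted_term w i)"

lemma X_power_dvd_weighted_term: "m \<le> k \<Longrightarrow> fps_X ^ m dvd weighted_term w k"
  unfolding weighted_term_def u_def power_mult_distrib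
  by (simp add: le_imp_power_dvd)

text \<open>
  Multiply the recurrence of \<open>g\<^sub>i\<close> by \<open>u\<^sup>i\<close> and use \<open>z u\<^sup>2 = \<tau>\<close> and \<open>z = (1 - \<tau>) u\<close>.
\<close>

lemma weighted_term_kernel:
  "weighted_term w i =
     (if i = 0 then fps_const (w 0) else 0)
     + \<tau> * (if 2 \<le> i then weighted_term (\<lambda>x. w (x + 2)) (i - 2) else 0)
     + (1 - \<tau>) * weighted_term (\<lambda>x. w (x - 1)) (i + 1)"
proof -
  consider "i = 0" | "i = 1" | k where "i = k + 2"
    by (metis One_nat_def add_2_eq_Suc' not0_implies_Suc)
  then show ?thesis
  proof cases
    case 1
    have "fps_const (w 0) * (1 + fps_X * ggen 1) = fps_const (w 0) + (1 - \<tau>) * (fps_const (w 0) * ggen 1 * u)"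
      using fps_X_eq by algebra
    moreover have "ggen 0 = 1 + fps_X * ggen 1"
      using ggen_rec[of 0] by simp
    ultimately show ?thesis
      using 1 by (simp add: weighted_term_def)
  next
    case 2
    have "ggen 1 = fps_X * ggen 2"
      using ggen_rec[of 1] by (simp add: numeral_2_eq_2)
    then have "fps_const (w 1) * ggen 1 * u = (1 - \<tau>) * (fps_const (w 1) * ggen 2 * u^2)"
      using fps_X_eq by algebra
    then have "weighted_term w 1 = (1 - \<tau>) * weighted_term (\<lambda>x. w (x - 1)) 2"
      by (simp add: weighted_term_def)
    then show ?thesis
      using 2 by (simp add: numeral_2_eq_2)
  next
    case 3
    have kernel: "c * (fps_X * (a + b)) * (p * u^2) = \<tau> * (c * a * p) + (1 - \<tau>) * (c * b * (p * u^2 * u))"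
      for a b c p
      using fps_X_eq fps_X_times_u_squared by algebra
    define c where "c = fps_const (w (real i))"
    have "ggen i = fps_X * (ggen k + ggen (k + 3))"
      using 3 ggen_rec[of i] by (simp add: numeral_3_eq_3)
    then have "weighted_term w i = c * (fps_X * (ggen k + ggen (k + 3))) * (u ^ k * u^2)"
      using 3 by (simp add: weighted_term_def c_def power_add power2_eq_square)
    also have "\<dots> = \<tau> * (c * ggen k * u ^ k) + (1 - \<tau>) * (c * ggen (k + 3) * (u ^ k * u^2 * u))"
      by (rule kernel)
    also have "\<dots> = \<tau> * weighted_term (\<lambda>x. w (x + 2)) k + (1 - \<tau>) * weighted_term (\<lambda>x. w (x - 1)) (k + 3)"
      using 3 by (simp add: weighted_term_def c_def power_add numeral_3_eq_3 power2_eq_square add.commute)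
    finally show ?thesis
      using 3 by (simp add: numeral_3_eq_3)
  qed
qed

lemma weighted_sum_kernel:
  "fps_X ^ m dvd weighted_sum w (m + 2) -
     (fps_const (w 0) + (1 - \<tau>) * (weighted_sum (\<lambda>x. w (x - 1)) (m + 2) - fps_const (w (-1)) * ggen 0)
      + \<tau> * weighted_sum (\<lambda>x. w (x + 2)) (m + 2))"
proof -
  define w1 where "w1 = (\<lambda>x. w (x - 1))"
  define w2 where "w2 = (\<lambda>x. w (x + 2))"
  have "weighted_term w i =
      (if i = 0 then fps_const (w 0) else 0) + \<tau> * (if 2 \<le> i then weighted_term w2 (i - 2) else 0)
      + (1 - \<tau>) * weighted_term w1 (i + 1)" for i
    unfolding w1_def w2_def by (rule weighted_term_kernel)
  then have split: "weighted_sum w (m + 2) = fps_const (w 0)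
      + \<tau> * (\<Sum>i<m + 2. if 2 \<le> i then weighted_term w2 (i - 2) else 0)
      + (1 - \<tau>) * (\<Sum>i<m + 2. weighted_term w1 (i + 1))"
    unfolding weighted_sum_def by (simp add: sum.distrib sum_distrib_left del: sum.lessThan_Suc)
  have shift2: "(\<Sum>i<m + 2. if 2 \<le> i then weighted_term w2 (i - 2) else 0) =
      weighted_sum w2 (m + 2) - weighted_term w2 m - weighted_term w2 (m + 1)"
  proof -
    have "(\<Sum>i<Suc (Suc m). if 2 \<le> i then weighted_term w2 (i - 2) else 0) = (\<Sum>j<m. weighted_term w2 j)"
      by (simp only: sum.lessThan_Suc_shift) simp
    then show ?thesis
      by (simp add: weighted_sum_def)
  qed
  have shift1: "(\<Sum>i<m + 2. weighted_term w1 (i + 1)) =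
      weighted_sum w1 (m + 2) + weighted_term w1 (m + 2) - fps_const (w (-1)) * ggen 0"
    using sum.lessThan_Suc_shift[of "weighted_term w1" "m + 2"]
    by (simp add: weighted_sum_def weighted_term_def w1_def)
  have "weighted_sum w (m + 2) -
      (fps_const (w 0) + (1 - \<tau>) * (weighted_sum w1 (m + 2) - fps_const (w (-1)) * ggen 0)
       + \<tau> * weighted_sum w2 (m + 2)) =
      (1 - \<tau>) * weighted_term w1 (m + 2) - \<tau> * (weighted_term w2 m + weighted_term w2 (m + 1))"
    unfolding split shift1 shift2 by (simp add: algebra_simps)
  also have "fps_X ^ m dvd \<dots>"
    by (intro dvd_diff dvd_mult dvd_add X_power_dvd_weighted_term) simp_all
  finally show ?thesis
    unfolding w1_def w2_def .
qed

lemma weighted_sum_quadratic: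
  "weighted_sum (\<lambda>x. a + b * x + c * x^2) M =
     fps_const a * weighted_sum (\<lambda>_. 1) M + fps_const b * weighted_sum (\<lambda>x. x) M
     + fps_const c * weighted_sum (\<lambda>x. x^2) M"
proof -
  have "fps_const (a + b * x + c * x^2) = fps_const a * fps_const 1 + fps_const b * fps_const x + fps_const c * fps_const (x^2)"
    for x
    by (simp only: fps_const_add fps_const_mult mult_1_right)
  then show ?thesis
    unfolding weighted_sum_def weighted_term_def sum_distrib_left sum.distrib[symmetric]
    by (intro sum.cong refl) (simp only: ring_distribs mult.assoc)
qed

lemma ggen_0_eq_B: "ggen 0 = B"
proof -
  have "fps_X ^ m dvd (1 - \<tau>) * ggen 0 - 1" for m
    using weighted_sum_kernel[of m "\<lambda>_. 1"] by (simp add: algebra_simps)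
  then have "(1 - \<tau>) * ggen 0 = 1"
    by (intro eq_if_X_power_dvd_diff)
  then show ?thesis
    using one_minus_tau_times_B by (metis mult.left_commute mult.right_neutral mult.commute)
qed

text \<open>
  The weights \<open>x\<close> and \<open>x\<^sup>2\<close> give \<open>(1 - 3\<tau>) S\<^sub>0 \<equiv> 1\<close> and \<open>(2 - 6\<tau>) S\<^sub>1 \<equiv> (1 + 3\<tau>) S\<^sub>0 - 1\<close>;
  eliminate \<open>S\<^sub>0\<close>.
\<close>

lemma first_moment_congruence:
  "fps_X ^ m dvd weighted_sum (\<lambda>x. x) (m + 2) - 3 * \<tau> * inverse ((1 - 3 * \<tau>)^2)"
proof -
  define S0 where "S0 = weighted_sum (\<lambda>_. 1) (m + 2)"
  define S1 where "S1 = weighted_sum (\<lambda>x. x) (m + 2)"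
  define S2 where "S2 = weighted_sum (\<lambda>x. x^2) (m + 2)"
  have const: "fps_const (0::real) = 0" "fps_const (1::real) = 1" "fps_const (-1::real) = -1"
      "fps_const (2::real) = 2" "fps_const (-2::real) = -2" "fps_const (4::real) = 4"
    by (simp_all only: fps_const_0_eq_0 fps_const_1_eq_1 fps_const_neg[symmetric] numeral_fps_const)
  have B: "(1 - \<tau>) * ggen 0 = 1"
    using one_minus_tau_times_B by (simp add: ggen_0_eq_B)
  have shifts1: "(\<lambda>x::real. x - 1) = (\<lambda>x. -1 + 1 * x + 0 * x^2)" "(\<lambda>x::real. x + 2) = (\<lambda>x. 2 + 1 * x + 0 * x^2)"
    by (auto simp: fun_eq_iff)
  have shifts2: "(\<lambda>x::real. (x - 1)^2) = (\<lambda>x. 1 + (-2) * x + 1 * x^2)"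
      "(\<lambda>x::real. (x + 2)^2) = (\<lambda>x. 4 + 4 * x + 1 * x^2)"
    by (auto simp: fun_eq_iff power2_eq_square algebra_simps)
  define K1 where "K1 = (1 - 3 * \<tau>) * S0 - 1"
  define K2 where "K2 = (2 - 6 * \<tau>) * S1 - (1 + 3 * \<tau>) * S0 + 1"
  have K1_dvd: "fps_X ^ m dvd K1"
  proof -
    have "fps_X ^ m dvd S1 - ((1 - \<tau>) * (- S0 + S1 + ggen 0) + \<tau> * (2 * S0 + S1))"
      using weighted_sum_kernel[of m "\<lambda>x. x"]
      unfolding shifts1 weighted_sum_quadratic S0_def[symmetric] S1_def[symmetric] S2_def[symmetric]
      by (simp add: const)
    moreover have "S1 - ((1 - \<tau>) * (- S0 + S1 + ggen 0) + \<tau> * (2 * S0 + S1)) = K1"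
      unfolding K1_def using B by algebra
    ultimately show ?thesis
      by simp
  qed
  have K2_dvd: "fps_X ^ m dvd K2"
  proof -
    have "fps_X ^ m dvd S2 - ((1 - \<tau>) * (S0 - 2 * S1 + S2 - ggen 0) + \<tau> * (4 * S0 + 4 * S1 + S2))"
      using weighted_sum_kernel[of m "\<lambda>x. x^2"]
      unfolding shifts2 weighted_sum_quadratic S0_def[symmetric] S1_def[symmetric] S2_def[symmetric]
      by (simp add: const)
    moreover have "S2 - ((1 - \<tau>) * (S0 - 2 * S1 + S2 - ggen 0) + \<tau> * (4 * S0 + 4 * S1 + S2)) = K2"
      unfolding K2_def using B by algebra
    ultimately show ?thesis
      by simp
  qed
  define I where "I = inverse ((1 - 3 * \<tau>)^2)"
  define half where "half = fps_const (1/2 :: real)"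
  have "I * (1 - 3 * \<tau>)^2 = 1"
    unfolding I_def by (rule inverse_mult_eq_1) (simp add: fps_nth_tau_0 fps_nth_power_0)
  moreover have "half * 2 = 1"
    by (simp add: half_def numeral_fps_const)
  ultimately have "S1 - 3 * \<tau> * I = half * I * ((1 - 3 * \<tau>) * K2 + (1 + 3 * \<tau>) * K1)"
    unfolding K1_def K2_def by algebra
  moreover have "fps_X ^ m dvd half * I * ((1 - 3 * \<tau>) * K2 + (1 + 3 * \<tau>) * K1)"
    using K1_dvd K2_dvd by (intro dvd_mult dvd_add)
  ultimately show ?thesis
    unfolding S1_def I_def by simp
qed

lemma level_weighted_sum_congruence:
  "fps_X ^ m dvd (\<Sum>i<m + 2. of_nat i * fgen i * ggen i) - 3 * \<tau> / ((1 - 3 * \<tau>)^2 * (1 - \<tau>))"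
proof -
  have "(\<Sum>i<m + 2. of_nat i * fgen i * ggen i) = B * weighted_sum (\<lambda>x. x) (m + 2)"
    unfolding weighted_sum_def weighted_term_def fgen_eq sum_distrib_left
    by (simp add: fps_of_nat[symmetric] mult_ac)
  moreover have "3 * \<tau> / ((1 - 3 * \<tau>)^2 * (1 - \<tau>)) = B * (3 * \<tau> * inverse ((1 - 3 * \<tau>)^2))"
    by (simp add: fps_divide_unit fps_nth_tau_0 fps_nth_power_0 fps_inverse_mult B_def mult_ac)
  ultimately show ?thesis
    using dvd_mult[OF first_moment_congruence, of m B] by (simp add: right_diff_distrib)
qed

end

theorem mainTheorem9:
  fixes T :: "real fps"
  assumes "T * (1 - T)^2 = fps_X" and "fps_nth T 0 = 0"
  shows "(\<lambda>i. of_nat i * fgen i * ggen i) sums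
           (3 * fps_compose T (fps_X ^ 3) /
              ((1 - 3 * fps_compose T (fps_X ^ 3))^2 * (1 - fps_compose T (fps_X ^ 3))))
       \<and> (\<forall>N. fps_nth (3 * fps_compose T (fps_X ^ 3) /
              ((1 - 3 * fps_compose T (fps_X ^ 3))^2 * (1 - fps_compose T (fps_X ^ 3)))) (3 * N)
             = of_int (total_area N))"
proof -
  define \<tau> where "\<tau> = fps_compose T (fps_X ^ 3)"
  have X3: "fps_nth (fps_X ^ 3 :: real fps) 0 = 0"
    by simp
  then have "\<tau> * (1 - \<tau>)^2 = fps_X ^ 3"
    using arg_cong[OF assms(1), of "\<lambda>f. fps_compose f (fps_X ^ 3)"]
    by (simp add: \<tau>_def fps_compose_mult_distrib fps_compose_sub_distrib fps_compose_power[symmetric])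
  then interpret ternary_kernel \<tau>
    by unfold_locales (simp_all add: \<tau>_def assms(2) X3)
  define R where "R = 3 * \<tau> / ((1 - 3 * \<tau>)^2 * (1 - \<tau>))"
  have "(\<lambda>i. of_nat i * fgen i * ggen i) sums R"
    unfolding R_def by (rule sums_if_X_power_dvd[OF level_weighted_sum_congruence])
  moreover have "fps_nth R (3 * N) = of_int (total_area N)" for N
  proof -
    have "fps_nth R (3 * N) = fps_nth (\<Sum>i<(3 * N + 1) + 2. of_nat i * fgen i * ggen i) (3 * N)"
      unfolding R_def by (rule fps_nth_eq_if_X_power_dvd_diff[OF level_weighted_sum_congruence, symmetric]) simp
    also have "\<dots> = of_int (total_area N)"
      unfolding total_area_def by (rule fps_nth_level_weighted_sum_eq_area) simp
    finally show ?thesis .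
  qed
  ultimately show ?thesis
    unfolding R_def \<tau>_def by blast
qed

end
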